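(* The suspension $\Sigma \widetilde C$ is $\mathcal{S}$-chain homotopy equivalent to $\widetilde C\otimes \widetilde{\mathcal{O}}(1)$.
   Context: Let $R$ be a commutative ring. An $\mathcal{S}$-complex over $R$ is a finitely generated free chain complex $(\widetilde C,\widetilde d)$ over $R$ with a graded module decomposition $\widetilde C = C\oplus C[-1]\oplus \mathsf{R}$ (where $C[i]_j=C_{i+j}$) such that, with respect to this decomposition, $\widetilde d=\begin{bmatrix} d&0&0\\ v&-d&\delta_2\\ \delta_1&0&r\end{bmatrix}$; equivalently it is a dg-module over $\Lambda_R(\chi)=R[\chi]/(\chi^2)$, $\deg\chi=1$, with $\chi$ mapping $C$ identically onto $C[-1]$ and zero otherwise. Morphisms are degree $0$ chain maps commuting with $\chi$, and $\mathcal{S}$-chain homotopies are chain homotopies anticommuting with $\chi$. The suspension $\Sigma\widetilde C=\widetilde C_\Sigma$ is the $\mathcal{S}$-complex $\widetilde C_\Sigma = C_\Sigma\oplus C_\Sigma[-1]\oplus\mathsf{R}$ with $C_\Sigma=C[-2]\oplus\mathsf{R}[-1]$ and differential, in block form with respect to $C[-2]\oplus\mathsf{R}[-1]\,|\,C[-3]\oplus \mathsf{R}[-2]\,|\,\mathsf{R}$, given by rows $(d,\,-\delta_2\,|\,0,\,0\,|\,0)$, $(0,\,-r\,|\,0,\,0\,|\,0)$, $(v,\,0\,|\,-d,\,\delta_2\,|\,v\delta_2)$, $(\delta_1,\,0\,|\,0,\,r\,|\,\delta_1\delta_2)$, $(0,\,1\,|\,0,\,0\,|\,r)$. The standard $\mathcal{S}$-complex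 $\widetilde{\mathcal{O}}(1)$ has $C=R$ in degree $1$, $\mathsf{R}=R$ in degree $0$, $d=v=\delta_2=0$ (and $r=0$), and $\delta_1:R_{(1)}\to R_{(0)}$ an isomorphism. The tensor product of $\mathcal{S}$-complexes is the tensor product chain complex with $\chi$-action $\chi\otimes 1+\varepsilon\otimes\chi'$, where $\varepsilon$ multiplies a homogeneous element of degree $i$ by $(-1)^i$. *)

theory Defs
  imports Main
begin

text \<open>Finitely generated free graded modules over a commutative ring 'a are represented
  by a finite basis type 'b together with a degree function 'b => int; elements are
  coefficient functions 'b => 'a. Homogeneous module maps are matrices
  M :: 'out => 'in => 'a (M i j = coefficient of basis element i in the image of j).\<close>

definition mmul :: "('b \<Rightarrow> 'c::finite \<Rightarrow> 'a::comm_ring_1) \<Rightarrow> ('c \<Rightarrow> 'd \<Rightarrow> 'a) \<Rightarrow> 'b \<Rightarrow> 'd \<Rightarrow> 'a" where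
  "mmul A B i k = (\<Sum>j\<in>UNIV. A i j * B j k)"

definition mid :: "'b \<Rightarrow> 'b \<Rightarrow> 'a::comm_ring_1" where
  "mid i j = (if i = j then 1 else 0)"

definition graded :: "('b \<Rightarrow> int) \<Rightarrow> ('c \<Rightarrow> int) \<Rightarrow> int \<Rightarrow> ('b \<Rightarrow> 'c \<Rightarrow> 'a::zero) \<Rightarrow> bool" where
  "graded dout din k M \<longleftrightarrow> (\<forall>i j. M i j \<noteq> 0 \<longrightarrow> dout i = din j + k)"

text \<open>A based graded module with an odd endomorphism D (differential, degree -1) and an
  endomorphism chi (degree +1): a (candidate) dg-module over Lambda_R(chi).\<close>
record ('b, 'a) bcx =
  deg :: "'b \<Rightarrow> int"
  dif :: "'b \<Rightarrow> 'b \<Rightarrow> 'a"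
  chi :: "'b \<Rightarrow> 'b \<Rightarrow> 'a"

text \<open>Data of an S-complex: the basis 'c of C with degrees, and the blocks d, v, delta1
  (C to R, a row), delta2 (R to C[-1], a column), r (R to R).\<close>
record ('c, 'a) scx =
  cdeg :: "'c \<Rightarrow> int"
  sd :: "'c \<Rightarrow> 'c \<Rightarrow> 'a"
  sv :: "'c \<Rightarrow> 'c \<Rightarrow> 'a"
  sdelta1 :: "'c \<Rightarrow> 'a"
  sdelta2 :: "'c \<Rightarrow> 'a"
  sr :: 'a

text \<open>The total complex C~ = C (+) C[-1] (+) R, basis  Inl c | Inr (Inl c) | Inr (Inr ()).\<close>
definition to_bcx :: "('c, 'a::comm_ring_1) scx \<Rightarrow> ('c + 'c + unit, 'a) bcx" where
  "to_bcx X = \<lparr> deg = (\<lambda>b. case b of Inl c \<Rightarrow> cdeg X c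
                                  | Inr (Inl c) \<Rightarrow> cdeg X c + 1
                                  | Inr (Inr _) \<Rightarrow> 0),
               dif = (\<lambda>a b. case (a, b) of
                        (Inl i, Inl j) \<Rightarrow> sd X i j
                      | (Inr (Inl i), Inl j) \<Rightarrow> sv X i j
                      | (Inr (Inl i), Inr (Inl j)) \<Rightarrow> - sd X i j
                      | (Inr (Inl i), Inr (Inr _)) \<Rightarrow> sdelta2 X i
                      | (Inr (Inr _), Inl j) \<Rightarrow> sdelta1 X j
                      | (Inr (Inr _), Inr (Inr _)) \<Rightarrow> sr X
                      | _ \<Rightarrow> 0),
               chi = (\<lambda>a b. case (a, b) of
                        (Inr (Inl i), Inl j) \<Rightarrow> (if i = j then 1 else 0)
                      | _ \<Rightarrow> 0) \<rparr>"

definition is_scx :: "('c::finite, 'a::comm_ring_1) scx \<Rightarrow> bool" where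
  "is_scx X \<longleftrightarrow> graded (deg (to_bcx X)) (deg (to_bcx X)) (-1) (dif (to_bcx X))
                 \<and> mmul (dif (to_bcx X)) (dif (to_bcx X)) = (\<lambda>_ _. 0)"

text \<open>Suspension: C_Sigma = C[-2] (+) R[-1], basis Inl c | Inr ().\<close>
definition susp :: "('c::finite, 'a::comm_ring_1) scx \<Rightarrow> ('c + unit, 'a) scx" where
  "susp X = \<lparr> cdeg = (\<lambda>b. case b of Inl c \<Rightarrow> cdeg X c + 2 | Inr _ \<Rightarrow> 1),
              sd = (\<lambda>a b. case (a, b) of
                       (Inl i, Inl j) \<Rightarrow> sd X i j
                     | (Inl i, Inr _) \<Rightarrow> - sdelta2 X i
                     | (Inr _, Inl j) \<Rightarrow> 0
                     | (Inr _, Inr _) \<Rightarrow> - sr X),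
              sv = (\<lambda>a b. case (a, b) of
                       (Inl i, Inl j) \<Rightarrow> sv X i j
                     | (Inl i, Inr _) \<Rightarrow> 0
                     | (Inr _, Inl j) \<Rightarrow> sdelta1 X j
                     | (Inr _, Inr _) \<Rightarrow> 0),
              sdelta1 = (\<lambda>b. case b of Inl j \<Rightarrow> 0 | Inr _ \<Rightarrow> 1),
              sdelta2 = (\<lambda>a. case a of
                       Inl i \<Rightarrow> (\<Sum>k\<in>UNIV. sv X i k * sdelta2 X k)
                     | Inr _ \<Rightarrow> (\<Sum>k\<in>UNIV. sdelta1 X k * sdelta2 X k)),
              sr = sr X \<rparr>"

text \<open>The standard S-complex O~(1): C = R in degree 1, R in degree 0, delta1 = u
  (an isomorphism, i.e. u a unit), all other blocks zero.\<close>
definition O1 :: "'a::comm_ring_1 \<Rightarrow> (unit, 'a) scx" where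
  "O1 u = \<lparr> cdeg = (\<lambda>_. 1), sd = (\<lambda>_ _. 0), sv = (\<lambda>_ _. 0),
            sdelta1 = (\<lambda>_. u), sdelta2 = (\<lambda>_. 0), sr = 0 \<rparr>"

definition epsilon :: "int \<Rightarrow> 'a::comm_ring_1" where
  "epsilon n = (if even n then 1 else -1)"

definition tensor :: "('b, 'a::comm_ring_1) bcx \<Rightarrow> ('e, 'a) bcx \<Rightarrow> ('b \<times> 'e, 'a) bcx" where
  "tensor X Y = \<lparr> deg = (\<lambda>(i, j). deg X i + deg Y j),
                  dif = (\<lambda>(i, j) (k, l). dif X i k * mid j l + epsilon (deg X k) * mid i k * dif Y j l),
                  chi = (\<lambda>(i, j) (k, l). chi X i k * mid j l + epsilon (deg X k) * mid i k * chi Y j l) \<rparr>"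

definition s_morphism :: "('b::finite, 'a::comm_ring_1) bcx \<Rightarrow> ('e::finite, 'a) bcx \<Rightarrow> ('e \<Rightarrow> 'b \<Rightarrow> 'a) \<Rightarrow> bool" where
  "s_morphism X Y f \<longleftrightarrow> graded (deg Y) (deg X) 0 f
     \<and> mmul (dif Y) f = mmul f (dif X) \<and> mmul (chi Y) f = mmul f (chi X)"

definition s_homotopy :: "('b::finite, 'a::comm_ring_1) bcx \<Rightarrow> ('e::finite, 'a) bcx
    \<Rightarrow> ('e \<Rightarrow> 'b \<Rightarrow> 'a) \<Rightarrow> ('e \<Rightarrow> 'b \<Rightarrow> 'a) \<Rightarrow> ('e \<Rightarrow> 'b \<Rightarrow> 'a) \<Rightarrow> bool" where
  "s_homotopy X Y f g h \<longleftrightarrow> graded (deg Y) (deg X) 1 h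
     \<and> (\<forall>i j. mmul (dif Y) h i j + mmul h (dif X) i j = f i j - g i j)
     \<and> (\<forall>i j. mmul (chi Y) h i j = - mmul h (chi X) i j)"

definition s_htpy_equiv :: "('b::finite, 'a::comm_ring_1) bcx \<Rightarrow> ('e::finite, 'a) bcx \<Rightarrow> bool" where
  "s_htpy_equiv X Y \<longleftrightarrow> (\<exists>f g h k. s_morphism X Y f \<and> s_morphism Y X g
     \<and> s_homotopy X X (mmul g f) mid h \<and> s_homotopy Y Y (mmul f g) mid k)"

end

theory Submission
  imports Defs
begin

text \<open>
  Write \<open>e, \<chi>e, 1\<close> for the basis of \<open>O~(1)\<close>, so that \<open>d e = u \<cdot> 1\<close> and \<open>\<chi>e\<close> is a cycle.
  For invertible \<open>u\<close> the pieces \<open>C \<otimes> e \<rightarrow> C \<otimes> 1\<close> and \<open>C[-1] \<otimes> e \<rightarrow> C[-1] \<otimes> 1\<close> of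
  \<open>C~ \<otimes> O~(1)\<close> cancel, and what survives is \<open>C~ \<otimes> \<chi>e \<oplus> R \<otimes> e \<oplus> R \<otimes> 1\<close>, a copy of
  \<open>\<Sigma>C~\<close>: \<open>C[-2]\<close> and \<open>C[-3]\<close> become \<open>C \<otimes> \<chi>e\<close> and \<open>C[-1] \<otimes> \<chi>e\<close>, the copies \<open>R[-1]\<close>,
  \<open>R[-2]\<close> and \<open>R\<close> become \<open>R \<otimes> e\<close>, \<open>R \<otimes> \<chi>e\<close> and \<open>u (R \<otimes> 1)\<close>. The inclusion \<open>f\<close> must be
  corrected by \<open>\<delta>\<^sub>2\<close> on the last summand, the retraction \<open>g\<close> by \<open>u\<^sup>-\<^sup>1 v\<close> and \<open>u\<^sup>-\<^sup>1 \<delta>\<^sub>1\<close>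
  on the \<open>C~ \<otimes> 1\<close> summands. Then \<open>g f = 1\<close> on the nose, and \<open>f g \<simeq> 1\<close> via a homotopy
  that inverts \<open>d e = u \<cdot> 1\<close>.
\<close>

lemma sum_UNIV_Plus:
  "(\<Sum>x\<in>(UNIV::('a::finite + 'b::finite) set). f x) = (\<Sum>x\<in>UNIV. f (Inl x)) + (\<Sum>x\<in>UNIV. f (Inr x))"
  using sum.Plus[of "UNIV::'a set" "UNIV::'b set" f] by (simp add: comp_def)

lemma sum_UNIV_prod:
  "(\<Sum>x\<in>(UNIV::('a::finite \<times> 'b::finite) set). f x) = (\<Sum>a\<in>UNIV. \<Sum>b\<in>UNIV. f (a, b))"
  using sum.cartesian_product[of "\<lambda>a b. f (a, b)" "UNIV::'b set" "UNIV::'a set"] by simp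

lemma sum_UNIV_unit: "(\<Sum>x\<in>(UNIV::unit set). f x) = f ()"
  by (simp add: UNIV_unit)

lemmas sum_UNIV_splits = sum_UNIV_Plus sum_UNIV_prod sum_UNIV_unit

lemma if_zero_mult:
  "(if P then y else 0) * (x::'a::mult_zero) = (if P then y * x else 0)"
  "x * (if P then y else 0) = (if P then x * y else 0)"
  by auto

lemma sum_mult_scale:
  "(\<Sum>j\<in>A. f j * ((c::'a::comm_semiring_0) * g j)) = c * (\<Sum>j\<in>A. f j * g j)"
  by (simp add: sum_distrib_left algebra_simps)

lemma sum_scale_mult:
  "(\<Sum>j\<in>A. (c::'a::comm_semiring_0) * f j * g j) = c * (\<Sum>j\<in>A. f j * g j)"
  by (simp add: sum_distrib_left algebra_simps)

lemma total_basis_cases: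
  fixes p :: "'c + 'c + unit"
  obtains (C) c where "p = Inl c" | (C_shift) c where "p = Inr (Inl c)" | (R) "p = Inr (Inr ())"
  by (metis old.unit.exhaust sum.exhaust)

lemma tensor_O1_basis_cases:
  fixes t :: "('c + 'c + unit) \<times> (unit + unit + unit)"
  obtains
    (C_e) c where "t = (Inl c, Inl ())"
  | (C_chi_e) c where "t = (Inl c, Inr (Inl ()))"
  | (C_1) c where "t = (Inl c, Inr (Inr ()))"
  | (C_shift_e) c where "t = (Inr (Inl c), Inl ())"
  | (C_shift_chi_e) c where "t = (Inr (Inl c), Inr (Inl ()))"
  | (C_shift_1) c where "t = (Inr (Inl c), Inr (Inr ()))"
  | (R_e) "t = (Inr (Inr ()), Inl ())"
  | (R_chi_e) "t = (Inr (Inr ()), Inr (Inl ()))"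
  | (R_1) "t = (Inr (Inr ()), Inr (Inr ()))"
proof -
  obtain p q where t: "t = (p, q)" by (cases t)
  show thesis
    by (cases p rule: total_basis_cases; cases q rule: total_basis_cases) (auto simp: t intro: that)
qed

lemma susp_basis_cases:
  fixes s :: "('c + unit) + ('c + unit) + unit"
  obtains
    (C) c where "s = Inl (Inl c)"
  | (R) "s = Inl (Inr ())"
  | (C_shift) c where "s = Inr (Inl (Inl c))"
  | (R_shift) "s = Inr (Inl (Inr ()))"
  | (R_base) "s = Inr (Inr ())"
  by (cases s rule: sum.exhaust; auto split: sum.splits; metis old.unit.exhaust sum.exhaust)

locale s_complex =
  fixes X :: "('c::finite, 'a::comm_ring_1) scx"
  assumes is_scx: "is_scx X"
begin

lemma dif_graded: "dif (to_bcx X) a b \<noteq> 0 \<Longrightarrow> deg (to_bcx X) a = deg (to_bcx X) b - 1"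
  using is_scx by (auto simp: is_scx_def graded_def)

lemma dif_squared: "mmul (dif (to_bcx X)) (dif (to_bcx X)) a b = 0"
  using is_scx by (simp add: is_scx_def)

lemma sd_deg: "sd X i j \<noteq> 0 \<Longrightarrow> cdeg X j = cdeg X i + 1"
  using dif_graded[of "Inl i" "Inl j"] by (simp add: to_bcx_def)

lemma sv_deg: "sv X i j \<noteq> 0 \<Longrightarrow> cdeg X j = cdeg X i + 2"
  using dif_graded[of "Inr (Inl i)" "Inl j"] by (simp add: to_bcx_def)

lemma sdelta1_deg: "sdelta1 X j \<noteq> 0 \<Longrightarrow> cdeg X j = 1"
  using dif_graded[of "Inr (Inr ())" "Inl j"] by (simp add: to_bcx_def)

lemma sdelta2_deg: "sdelta2 X i \<noteq> 0 \<Longrightarrow> cdeg X i = -2"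
  using dif_graded[of "Inr (Inl i)" "Inr (Inr ())"] by (simp add: to_bcx_def)

lemma sr_eq_0: "sr X = 0"
  using dif_graded[of "Inr (Inr ())" "Inr (Inr ())"] by (simp add: to_bcx_def) blast

lemma sd_sd: "(\<Sum>k\<in>UNIV. sd X i k * sd X k j) = 0"
  using dif_squared[of "Inl i" "Inl j"] by (simp add: to_bcx_def mmul_def sum_UNIV_splits)

lemma sv_sd:
  "(\<Sum>k\<in>UNIV. sv X i k * sd X k j) = (\<Sum>k\<in>UNIV. sd X i k * sv X k j) - sdelta2 X i * sdelta1 X j"
  using dif_squared[of "Inr (Inl i)" "Inl j"]
  by (simp add: to_bcx_def mmul_def sum_UNIV_splits sum_negf algebra_simps)

lemma sdelta1_sd: "(\<Sum>k\<in>UNIV. sdelta1 X k * sd X k j) = 0"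
  using dif_squared[of "Inr (Inr ())" "Inl j"] sr_eq_0
  by (simp add: to_bcx_def mmul_def sum_UNIV_splits)

lemma sd_sdelta2: "(\<Sum>k\<in>UNIV. sd X i k * sdelta2 X k) = 0"
  using dif_squared[of "Inr (Inl i)" "Inr (Inr ())"] sr_eq_0
  by (simp add: to_bcx_def mmul_def sum_UNIV_splits sum_negf)

text \<open>The signs \<open>epsilon\<close> of the tensor product see degrees only mod 2; this is the form
  in which the grading enters the matrix computations.\<close>

lemma sdelta1_even: "even (cdeg X j) \<Longrightarrow> sdelta1 X j = 0"
  using sdelta1_deg by fastforce

lemma sdelta2_odd: "odd (cdeg X i) \<Longrightarrow> sdelta2 X i = 0"
  using sdelta2_deg by fastforce

lemma sd_same_parity: "even (cdeg X i) = even (cdeg X j) \<Longrightarrow> sd X i j = 0"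
  using sd_deg by fastforce

lemma sv_opposite_parity: "even (cdeg X i) \<noteq> even (cdeg X j) \<Longrightarrow> sv X i j = 0"
  using sv_deg by fastforce

lemmas relations = sr_eq_0 sd_sd sv_sd sdelta1_sd sd_sdelta2
  sdelta1_even sdelta2_odd sd_same_parity sv_opposite_parity

end

locale s_complex_unit = s_complex X for X :: "('c::finite, 'a::comm_ring_1) scx" +
  fixes u w :: 'a
  assumes u_inverse: "u * w = 1"
begin

lemma w_inverse: "w * u = 1"
  using u_inverse by (simp add: mult.commute)

lemma inverse_cancel: "u * (w * x) = x" "w * (u * x) = x"
  by (simp_all add: mult.assoc[symmetric] u_inverse w_inverse)

lemmas inverse_simps = u_inverse w_inverse inverse_cancel

abbreviation Susp :: "(('c + unit) + ('c + unit) + unit, 'a) bcx" where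
  "Susp \<equiv> to_bcx (susp X)"

abbreviation Tens :: "(('c + 'c + unit) \<times> (unit + unit + unit), 'a) bcx" where
  "Tens \<equiv> tensor (to_bcx X) (to_bcx (O1 u))"

definition susp_to_tensor :: "('c + 'c + unit) \<times> (unit + unit + unit) \<Rightarrow> ('c + unit) + ('c + unit) + unit \<Rightarrow> 'a" where
  "susp_to_tensor t s = (case (t, s) of
     ((Inl i, Inr (Inl _)), Inl (Inl j)) \<Rightarrow> mid i j
   | ((Inr (Inl i), Inr (Inl _)), Inr (Inl (Inl j))) \<Rightarrow> mid i j
   | ((Inr (Inl i), Inl _), Inr (Inr _)) \<Rightarrow> sdelta2 X i
   | ((Inl i, Inr (Inl _)), Inr (Inr _)) \<Rightarrow> sdelta2 X i
   | ((Inr (Inr _), Inl _), Inl (Inr _)) \<Rightarrow> 1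
   | ((Inr (Inr _), Inr (Inl _)), Inr (Inl (Inr _))) \<Rightarrow> 1
   | ((Inr (Inr _), Inr (Inr _)), Inr (Inr _)) \<Rightarrow> u
   | _ \<Rightarrow> 0)"

definition tensor_to_susp :: "('c + unit) + ('c + unit) + unit \<Rightarrow> ('c + 'c + unit) \<times> (unit + unit + unit) \<Rightarrow> 'a" where
  "tensor_to_susp s t = (case (s, t) of
     (Inl (Inl i), (Inr (Inl j), Inl _)) \<Rightarrow> - epsilon (cdeg X j) * mid i j
   | (Inl (Inl i), (Inl j, Inr (Inl _))) \<Rightarrow> mid i j
   | (Inr (Inl (Inl i)), (Inr (Inl j), Inr (Inl _))) \<Rightarrow> mid i j
   | (Inl (Inl i), (Inl j, Inr (Inr _))) \<Rightarrow> w * sv X i j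
   | (Inr (Inl (Inl i)), (Inr (Inl j), Inr (Inr _))) \<Rightarrow> w * sv X i j
   | (Inl (Inr _), (Inl j, Inr (Inr _))) \<Rightarrow> w * sdelta1 X j
   | (Inr (Inl (Inr _)), (Inr (Inl j), Inr (Inr _))) \<Rightarrow> w * sdelta1 X j
   | (Inl (Inr _), (Inr (Inr _), Inl _)) \<Rightarrow> 1
   | (Inr (Inl (Inr _)), (Inr (Inr _), Inr (Inl _))) \<Rightarrow> 1
   | (Inr (Inr _), (Inr (Inr _), Inr (Inr _))) \<Rightarrow> w
   | _ \<Rightarrow> 0)"

definition tensor_htpy :: "('c + 'c + unit) \<times> (unit + unit + unit) \<Rightarrow> ('c + 'c + unit) \<times> (unit + unit + unit) \<Rightarrow> 'a" where
  "tensor_htpy t t' = (case (t, t') of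
     ((Inl i, Inl _), (Inl j, Inr (Inr _))) \<Rightarrow> - epsilon (cdeg X j) * w * mid i j
   | ((Inr (Inl i), Inl _), (Inr (Inl j), Inr (Inr _))) \<Rightarrow> epsilon (cdeg X j) * w * mid i j
   | ((Inl i, Inr (Inl _)), (Inr (Inl j), Inr (Inr _))) \<Rightarrow> w * mid i j
   | _ \<Rightarrow> 0)"

lemmas map_defs = susp_to_tensor_def tensor_to_susp_def tensor_htpy_def

lemmas matrix_simps = mmul_def sum_UNIV_splits sum.distrib sum_negf ring_distribs mid_def
  if_zero_mult epsilon_def tensor_def to_bcx_def susp_def O1_def map_defs relations

lemmas deg_dests = sv_deg sdelta1_deg sdelta2_deg
  sv_deg[OF mult_not_zero[THEN conjunct2]] sdelta1_deg[OF mult_not_zero[THEN conjunct2]]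

lemma susp_to_tensor_graded: "graded (deg Tens) (deg Susp) 0 susp_to_tensor"
  unfolding graded_def
proof (intro allI impI)
  fix t s assume "susp_to_tensor t s \<noteq> 0"
  then show "deg Tens t = deg Susp s + 0"
    by (cases t rule: tensor_O1_basis_cases; cases s rule: susp_basis_cases;
        auto simp: map_defs tensor_def to_bcx_def susp_def O1_def mid_def
             split: if_splits dest: deg_dests)
qed

lemma tensor_to_susp_graded: "graded (deg Susp) (deg Tens) 0 tensor_to_susp"
  unfolding graded_def
proof (intro allI impI)
  fix s t assume "tensor_to_susp s t \<noteq> 0"
  then show "deg Susp s = deg Tens t + 0"
    by (cases s rule: susp_basis_cases; cases t rule: tensor_O1_basis_cases;
        auto simp: map_defs tensor_def to_bcx_def susp_def O1_def mid_def
             split: if_splits dest: deg_dests)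
qed

lemma tensor_htpy_graded: "graded (deg Tens) (deg Tens) 1 tensor_htpy"
  unfolding graded_def
proof (intro allI impI)
  fix t t' assume "tensor_htpy t t' \<noteq> 0"
  then show "deg Tens t = deg Tens t' + 1"
    by (cases t rule: tensor_O1_basis_cases; cases t' rule: tensor_O1_basis_cases;
        auto simp: map_defs tensor_def to_bcx_def susp_def O1_def mid_def
             split: if_splits dest: deg_dests)
qed

lemma susp_to_tensor_dif: "mmul (dif Tens) susp_to_tensor = mmul susp_to_tensor (dif Susp)"
proof (intro ext)
  fix t s
  show "mmul (dif Tens) susp_to_tensor t s = mmul susp_to_tensor (dif Susp) t s"
    by (cases t rule: tensor_O1_basis_cases; cases s rule: susp_basis_cases;
        simp add: matrix_simps cong: if_cong)
qed

lemma susp_to_tensor_chi: "mmul (chi Tens) susp_to_tensor = mmul susp_to_tensor (chi Susp)"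
proof (intro ext)
  fix t s
  show "mmul (chi Tens) susp_to_tensor t s = mmul susp_to_tensor (chi Susp) t s"
    by (cases t rule: tensor_O1_basis_cases; cases s rule: susp_basis_cases;
        simp add: matrix_simps cong: if_cong)
qed

lemma tensor_to_susp_dif: "mmul (dif Susp) tensor_to_susp = mmul tensor_to_susp (dif Tens)"
proof (intro ext)
  fix s t
  \<comment> \<open>\<open>w\<close> is pulled out of the sums first, so that \<open>sv_sd\<close> fires before
      AC-normalisation reorders the products inside them.\<close>
  show "mmul (dif Susp) tensor_to_susp s t = mmul tensor_to_susp (dif Tens) s t"
    by (cases s rule: susp_basis_cases; cases t rule: tensor_O1_basis_cases;
        simp add: matrix_simps cong: if_cong;
        (simp only: sum_mult_scale sum_scale_mult)?; (simp only: sv_sd sdelta1_sd)?;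
        (simp add: algebra_simps inverse_simps)?)
qed

lemma tensor_to_susp_chi: "mmul (chi Susp) tensor_to_susp = mmul tensor_to_susp (chi Tens)"
proof (intro ext)
  fix s t
  show "mmul (chi Susp) tensor_to_susp s t = mmul tensor_to_susp (chi Tens) s t"
    by (cases s rule: susp_basis_cases; cases t rule: tensor_O1_basis_cases;
        simp add: matrix_simps cong: if_cong)
qed

lemma tensor_to_susp_susp_to_tensor: "mmul tensor_to_susp susp_to_tensor = mid"
proof (intro ext)
  fix s s'
  show "mmul tensor_to_susp susp_to_tensor s s' = mid s s'"
    by (cases s rule: susp_basis_cases; cases s' rule: susp_basis_cases;
        simp add: mmul_def sum_UNIV_splits map_defs mid_def if_zero_mult epsilon_def
                  sdelta2_odd inverse_simps)
qed

lemma tensor_htpy_dif: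
  "mmul (dif Tens) tensor_htpy t t' + mmul tensor_htpy (dif Tens) t t'
     = mmul susp_to_tensor tensor_to_susp t t' - mid t t'"
  by (cases t rule: tensor_O1_basis_cases; cases t' rule: tensor_O1_basis_cases;
      simp add: matrix_simps inverse_simps cong: if_cong)

lemma tensor_htpy_chi: "mmul (chi Tens) tensor_htpy t t' = - mmul tensor_htpy (chi Tens) t t'"
  by (cases t rule: tensor_O1_basis_cases; cases t' rule: tensor_O1_basis_cases;
      simp add: matrix_simps cong: if_cong)

theorem susp_htpy_equiv_tensor_O1: "s_htpy_equiv Susp Tens"
  unfolding s_htpy_equiv_def
proof (intro exI conjI)
  show "s_morphism Susp Tens susp_to_tensor"
    using susp_to_tensor_graded susp_to_tensor_dif susp_to_tensor_chi
    by (simp add: s_morphism_def)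
  show "s_morphism Tens Susp tensor_to_susp"
    using tensor_to_susp_graded tensor_to_susp_dif tensor_to_susp_chi
    by (simp add: s_morphism_def)
  show "s_homotopy Susp Susp (mmul tensor_to_susp susp_to_tensor) mid (\<lambda>_ _. 0)"
    by (simp add: s_homotopy_def tensor_to_susp_susp_to_tensor graded_def mmul_def)
  show "s_homotopy Tens Tens (mmul susp_to_tensor tensor_to_susp) mid tensor_htpy"
    using tensor_htpy_graded tensor_htpy_dif tensor_htpy_chi by (simp add: s_homotopy_def)
qed

end

theorem proposition2p5:
  fixes X :: "('c::finite, 'a::comm_ring_1) scx" and u :: 'a
  assumes "is_scx X" and "u dvd 1"
  shows "s_htpy_equiv (to_bcx (susp X)) (tensor (to_bcx X) (to_bcx (O1 u)))"
proof -
  obtain w where "u * w = 1"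
    using \<open>u dvd 1\<close> by (metis dvd_def)
  then interpret s_complex_unit X u w
    using \<open>is_scx X\<close> by unfold_locales
  show ?thesis
    by (rule susp_htpy_equiv_tensor_O1)
qed

end
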